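(* The following six elements of $\Delta$ are all equal: \begin{gather*} qABC + q^2A^2+q^{-2}B^2+q^2C^2-q A\alpha -q^{-1} B\beta -q C\gamma,\\ qBCA + q^2A^2 + q^2B^2+q^{-2}C^2 -q A\alpha -qB\beta -q^{-1}C\gamma,\\ qCAB + q^{-2}A^2+q^2B^2 +q^2 C^2 -q^{-1} A\alpha -q B \beta -q C\gamma,\\ q^{-1}CBA + q^{-2}A^2+q^{2}B^2+q^{-2}C^2-q^{-1}A\alpha -q B\beta - q^{-1} C\gamma,\\ q^{-1}ACB + q^{-2}A^2 + q^{-2}B^2+q^{2}C^2 -q^{-1} A\alpha -q^{-1}B\beta -q C\gamma,\\ q^{-1}BAC + q^{2}A^2+q^{-2}B^2 +q^{-2}C^2 -q A\alpha -q^{-1} B \beta -q^{-1} C\gamma. \end{gather*}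
   Context: Let $\mathbb F$ be a field and fix a nonzero $q\in\mathbb F$ with $q^4\neq 1$. The universal Askey--Wilson algebra $\Delta$ is the associative $\mathbb F$-algebra with 1 with generators $A,B,C$ subject to the relations that each of $A+\frac{qBC-q^{-1}CB}{q^2-q^{-2}}$, $B+\frac{qCA-q^{-1}AC}{q^2-q^{-2}}$, $C+\frac{qAB-q^{-1}BA}{q^2-q^{-2}}$ is central; $\alpha,\beta,\gamma$ denote these three central elements (in order) each multiplied by $q+q^{-1}$. *)

theory Defs
  imports Main
begin

text \<open>An associative F-algebra with 1 is modelled as a ring 'a together with a
unital ring homomorphism from the field 'k into the centre of 'a (scalars).\<close>

definition alg_emb :: "('k::field \<Rightarrow> 'a::ring_1) \<Rightarrow> bool" where
  "alg_emb emb \<longleftrightarrow> emb 1 = 1 \<and> (\<forall>x y. emb (x + y) = emb x + emb y)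
     \<and> (\<forall>x y. emb (x * y) = emb x * emb y) \<and> (\<forall>x a. emb x * a = a * emb x)"

definition central :: "'a::ring \<Rightarrow> bool" where
  "central z \<longleftrightarrow> (\<forall>y. z * y = y * z)"

definition aw_rel :: "('k::field \<Rightarrow> 'a::ring_1) \<Rightarrow> 'k \<Rightarrow> 'a \<Rightarrow> 'a \<Rightarrow> 'a \<Rightarrow> 'a" where
  "aw_rel emb q X Y Z =
     X + emb (inverse (q^2 - inverse q^2)) * (emb q * Y * Z - emb (inverse q) * Z * Y)"

definition aw_cas :: "('k::field \<Rightarrow> 'a::ring_1) \<Rightarrow> 'k \<Rightarrow> 'a \<Rightarrow> 'a \<Rightarrow> 'a \<Rightarrow> 'a" where
  "aw_cas emb q X Y Z = emb (q + inverse q) * aw_rel emb q X Y Z"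

end

theory Submission imports Defs begin

text \<open>Write \<open>X\<close> for one of \<open>A, B, C\<close> and \<open>Y, Z\<close> for the other two in cyclic order. Since
\<open>X\<close> commutes with itself, centrality of \<open>X + (qYZ - q\<^sup>-\<^sup>1ZY)/(q\<^sup>2 - q\<^sup>-\<^sup>2)\<close> says that \<open>X\<close>
commutes with \<open>qYZ - q\<^sup>-\<^sup>1ZY\<close>; and because \<open>(q - q\<^sup>-\<^sup>1)(q + q\<^sup>-\<^sup>1) = q\<^sup>2 - q\<^sup>-\<^sup>2\<close>,
the central element \<open>\<alpha>\<close> attached to \<open>X\<close> satisfies
\<open>(q - q\<^sup>-\<^sup>1) X\<alpha> = (q\<^sup>2 - q\<^sup>-\<^sup>2) X\<^sup>2 + qXYZ - q\<^sup>-\<^sup>1XZY\<close>.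
The differences of the six elements are linear combinations of these identities.\<close>

context
  fixes emb :: "'k::field \<Rightarrow> 'a::ring_1"
  assumes emb: "alg_emb emb"
begin

lemma emb_1: "emb 1 = 1"
  using emb unfolding alg_emb_def by blast

lemma emb_add: "emb (x + y) = emb x + emb y"
  using emb unfolding alg_emb_def by blast

lemma emb_mult: "emb (x * y) = emb x * emb y"
  using emb unfolding alg_emb_def by blast

lemma emb_commute: "emb x * a = a * emb x"
  using emb unfolding alg_emb_def by blast

lemma mult_emb_left_commute: "a * (emb x * b) = emb x * (a * b)"
  by (metis emb_commute mult.assoc)

lemma emb_diff: "emb (x - y) = emb x - emb y"
  by (metis add_diff_cancel_right' diff_add_cancel emb_add)

lemma emb_power: "emb (x ^ n) = emb x ^ n"
  by (induction n) (simp_all add: emb_1 emb_mult)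

lemma emb_inverse_mult_cancel:
  assumes "c \<noteq> 0"
  shows "emb (inverse c) * (emb c * a) = a"
  using assms by (simp add: mult.assoc[symmetric] emb_mult[symmetric] emb_1)

lemma emb_mult_inverse_cancel:
  assumes "c \<noteq> 0"
  shows "emb c * (emb (inverse c) * a) = a"
  using assms by (simp add: mult.assoc[symmetric] emb_mult[symmetric] emb_1)

lemma emb_mult_left_cancel:
  assumes "c \<noteq> 0" and "emb c * a = emb c * b"
  shows "a = b"
  by (metis assms emb_inverse_mult_cancel)

lemma commute_with_aw_bracket:
  assumes "q^2 - inverse q^2 \<noteq> 0" and "central (aw_rel emb q X Y Z)"
  shows "emb q*X*Y*Z - emb (inverse q)*X*Z*Y = emb q*Y*Z*X - emb (inverse q)*Z*Y*X"
proof -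
  define T where "T = emb (inverse (q^2 - inverse q^2))"
  define W where "W = emb q * Y * Z - emb (inverse q) * Z * Y"
  have "X * (X + T * W) = (X + T * W) * X"
    using assms(2) unfolding central_def aw_rel_def T_def W_def by metis
  then have "T * (X * W) = T * (W * X)"
    unfolding T_def by (simp add: distrib_left distrib_right mult.assoc mult_emb_left_commute[of X])
  then have "X * W = W * X"
    using emb_mult_left_cancel assms(1) unfolding T_def by (metis inverse_nonzero_iff_nonzero)
  then show ?thesis
    unfolding W_def by (simp only: right_diff_distrib left_diff_distrib mult.assoc mult_emb_left_commute[of X])
qed

lemma aw_cas_mult_left:
  assumes "q^2 - inverse q^2 \<noteq> 0"
  shows "emb q*X*aw_cas emb q X Y Z - emb (inverse q)*X*aw_cas emb q X Y Z
     = emb q^2*X^2 - emb (inverse q)^2*X^2 + emb q*X*Y*Z - emb (inverse q)*X*Z*Y"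
proof -
  define d where "d = q^2 - inverse q^2"
  define W where "W = emb q * Y * Z - emb (inverse q) * Z * Y"
  have d_factor: "emb (q - inverse q) * emb (q + inverse q) = emb d"
    unfolding d_def emb_mult[symmetric] by (simp add: algebra_simps power2_eq_square)
  have "emb q*X*aw_cas emb q X Y Z - emb (inverse q)*X*aw_cas emb q X Y Z
      = emb (q - inverse q) * X * (emb (q + inverse q) * (X + emb (inverse d) * W))"
    unfolding aw_cas_def aw_rel_def d_def[symmetric] W_def[symmetric] emb_diff
    by (simp only: left_diff_distrib)
  also have "\<dots> = emb d * (X * X) + emb d * (emb (inverse d) * (X * W))"
    by (simp only: distrib_left mult.assoc mult_emb_left_commute[of X] d_factor[symmetric])
  also have "\<dots> = emb d * (X * X) + X * W"
    using assms emb_mult_inverse_cancel unfolding d_def by simp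
  also have "\<dots> = emb q^2*X^2 - emb (inverse q)^2*X^2 + emb q*X*Y*Z - emb (inverse q)*X*Z*Y"
    unfolding d_def W_def emb_diff emb_power
    apply (simp only: power2_eq_square right_diff_distrib left_diff_distrib mult.assoc mult_emb_left_commute[of X])
    by (simp only: add_diff_eq diff_right_commute)
  finally show ?thesis .
qed

end

lemma square_diff_inverse_square_nonzero:
  fixes q :: "'k::field"
  assumes "q \<noteq> 0" and "q ^ 4 \<noteq> 1"
  shows "q^2 - inverse q^2 \<noteq> 0"
proof
  assume "q^2 - inverse q^2 = 0"
  then have "q^2 * q^2 = 1"
    using assms(1) by (simp add: power_inverse field_simps)
  then show False
    using assms(2) by (simp add: power2_eq_square power4_eq_xxxx mult.assoc)
qed

text \<open>The variables name the monomials of the theorem: \<open>pABC = qABC\<close>, \<open>mA2 = q\<^sup>-\<^sup>2A\<^sup>2\<close>,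
\<open>pAa = qA\<alpha>\<close>, and so on.\<close>

lemma six_terms_equal_by_linear_relations:
  fixes pABC pBCA pCAB mCBA mACB mBAC pA2 mA2 pB2 mB2 pC2 mC2 pAa mAa pBb mBb pCc mCc
    :: "'a::ab_group_add"
  assumes "pAa - mAa = pA2 - mA2 + pABC - mACB"
    and "pBb - mBb = pB2 - mB2 + pBCA - mBAC"
    and "pCc - mCc = pC2 - mC2 + pCAB - mCBA"
    and "pABC - mACB = pBCA - mCBA"
    and "pBCA - mBAC = pCAB - mACB"
  shows "let e1 = pABC + pA2 + mB2 + pC2 - pAa - mBb - pCc;
             e2 = pBCA + pA2 + pB2 + mC2 - pAa - pBb - mCc;
             e3 = pCAB + mA2 + pB2 + pC2 - mAa - pBb - pCc;
             e4 = mCBA + mA2 + pB2 + mC2 - mAa - pBb - mCc;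
             e5 = mACB + mA2 + mB2 + pC2 - mAa - mBb - pCc;
             e6 = mBAC + pA2 + mB2 + mC2 - pAa - mBb - mCc
         in e1 = e2 \<and> e2 = e3 \<and> e3 = e4 \<and> e4 = e5 \<and> e5 = e6"
proof -
  have cas_A: "pAa = mAa + (pA2 - mA2 + pABC - mACB)"
    and cas_B: "pBb = mBb + (pB2 - mB2 + pBCA - mBAC)"
    and cas_C: "pCc = mCc + (pC2 - mC2 + pCAB - mCBA)"
    and bracket_A: "pABC = mACB + (pBCA - mCBA)"
    and bracket_B: "pBCA = mBAC + (pCAB - mACB)"
    using assms by (simp_all add: diff_eq_eq add.commute)
  show ?thesis
    unfolding Let_def cas_A cas_B cas_C by (simp add: bracket_A bracket_B algebra_simps)
qed

theorem lemma6p1: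
  fixes emb :: "'k::field \<Rightarrow> 'a::ring_1" and q :: 'k and A B C :: 'a
  assumes "alg_emb emb" and "q \<noteq> 0" and "q ^ 4 \<noteq> 1"
    and "central (aw_rel emb q A B C)" and "central (aw_rel emb q B C A)"
    and "central (aw_rel emb q C A B)"
  shows "let \<alpha> = aw_cas emb q A B C; \<beta> = aw_cas emb q B C A; \<gamma> = aw_cas emb q C A B;
             p = emb q; m = emb (inverse q);
             e1 = p*A*B*C + p^2*A^2 + m^2*B^2 + p^2*C^2 - p*A*\<alpha> - m*B*\<beta> - p*C*\<gamma>;
             e2 = p*B*C*A + p^2*A^2 + p^2*B^2 + m^2*C^2 - p*A*\<alpha> - p*B*\<beta> - m*C*\<gamma>;
             e3 = p*C*A*B + m^2*A^2 + p^2*B^2 + p^2*C^2 - m*A*\<alpha> - p*B*\<beta> - p*C*\<gamma>;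
             e4 = m*C*B*A + m^2*A^2 + p^2*B^2 + m^2*C^2 - m*A*\<alpha> - p*B*\<beta> - m*C*\<gamma>;
             e5 = m*A*C*B + m^2*A^2 + m^2*B^2 + p^2*C^2 - m*A*\<alpha> - m*B*\<beta> - p*C*\<gamma>;
             e6 = m*B*A*C + p^2*A^2 + m^2*B^2 + m^2*C^2 - p*A*\<alpha> - m*B*\<beta> - m*C*\<gamma>
         in e1 = e2 \<and> e2 = e3 \<and> e3 = e4 \<and> e4 = e5 \<and> e5 = e6"
proof -
  have d_nonzero: "q^2 - inverse q^2 \<noteq> 0"
    using assms(2,3) by (rule square_diff_inverse_square_nonzero)
  note cas = aw_cas_mult_left[OF assms(1) d_nonzero]
  note bracket = commute_with_aw_bracket[OF assms(1) d_nonzero]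
  show ?thesis
    using six_terms_equal_by_linear_relations
      [OF cas[of A B C] cas[of B C A] cas[of C A B] bracket[OF assms(4)] bracket[OF assms(5)]]
    by (simp only: Let_def)
qed

end
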